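(* Let $\Omega\subset\mathbb{R}^N$ be an open bounded domain and $j\in\{1,\dots,N\}$. Let $\pi:\mathbb{R}^N\to\mathbb{R}$ be an affine function, $g=\pi|_{\partial\Omega}$, and $u_0\in C(\overline\Omega)$ with $u_0|_{\partial\Omega}=g$. Let $u$ be the viscosity solution of $u_t-\lambda_j(D^2u)=0$ in $\Omega\times(0,\infty)$, $u=g$ on $\partial\Omega\times(0,\infty)$, $u(\cdot,0)=u_0$, and let $z=\pi$ (which is the viscosity solution of $\lambda_j(D^2z)=0$ in $\Omega$, $z=g$ on $\partial\Omega$). Then there exists $T>0$, depending only on $\Omega$ (not on $u_0$), such that: (1) if $j=1$, then $u(x,t)\le z(x)$ for all $x\in\Omega$, $t>T$; (2) if $j=N$, then $u(x,t)\ge z(x)$ for all $x\in\Omega$, $t>T$; (3) if $1<j<N$, then $u(x,t)=z(x)$ for all $x\in\Omega$, $t>T$.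
   Context: $\lambda_j(A)$ is the $j$-th smallest eigenvalue of a symmetric matrix $A$, $\lambda_j(A)=\inf_{\dim S=j}\sup_{v\in S,|v|=1}\langle Av,v\rangle$. Solutions are viscosity solutions, continuous up to the parabolic boundary, attaining the data pointwise. *)

theory Defs
  imports "HOL-Analysis.Analysis"
begin

text \<open>j-th smallest eigenvalue of a (symmetric) matrix via the Courant--Fischer min-max
  formula: inf over j-dimensional subspaces S of sup over unit vectors v in S of (A v) . v.\<close>
definition eig_j :: "nat \<Rightarrow> real^'n^'n \<Rightarrow> real" where
  "eig_j j A = (INF S \<in> {S :: (real^'n) set. subspace S \<and> dim S = j}.
                  SUP v \<in> {v \<in> S. norm v = 1}. (A *v v) \<bullet> v)"

definition C21_on :: "((real^'n) \<times> real) set \<Rightarrow> (real^'n \<Rightarrow> real \<Rightarrow> real)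
     \<Rightarrow> (real^'n \<Rightarrow> real \<Rightarrow> real^'n) \<Rightarrow> (real^'n \<Rightarrow> real \<Rightarrow> real^'n^'n)
     \<Rightarrow> (real^'n \<Rightarrow> real \<Rightarrow> real) \<Rightarrow> bool" where
  "C21_on U phi phix phixx phit \<longleftrightarrow>
     open U \<and>
     (\<forall>(x,t) \<in> U.
        ((\<lambda>y. phi y t) has_derivative (\<lambda>h. phix x t \<bullet> h)) (at x) \<and>
        ((\<lambda>y. phix y t) has_derivative (\<lambda>h. phixx x t *v h)) (at x) \<and>
        ((\<lambda>s. phi x s) has_real_derivative phit x t) (at t)) \<and>
     continuous_on U (\<lambda>(x,t). phi x t) \<and>
     continuous_on U (\<lambda>(x,t). phix x t) \<and>
     continuous_on U (\<lambda>(x,t). phixx x t) \<and>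
     continuous_on U (\<lambda>(x,t). phit x t)"

definition visc_subsol :: "nat \<Rightarrow> (real^'n) set \<Rightarrow> (real^'n \<Rightarrow> real \<Rightarrow> real) \<Rightarrow> bool" where
  "visc_subsol j \<Omega> u \<longleftrightarrow>
     (\<forall>x0 t0 U phi phix phixx phit.
        x0 \<in> \<Omega> \<and> t0 > 0 \<and> (x0,t0) \<in> U \<and> C21_on U phi phix phixx phit \<and>
        (\<exists>r>0. \<forall>x t. x \<in> \<Omega> \<and> t > 0 \<and> dist (x,t) (x0,t0) < r \<longrightarrow>
                  u x t - phi x t \<le> u x0 t0 - phi x0 t0)
        \<longrightarrow> phit x0 t0 - eig_j j (phixx x0 t0) \<le> 0)"

definition visc_supersol :: "nat \<Rightarrow> (real^'n) set \<Rightarrow> (real^'n \<Rightarrow> real \<Rightarrow> real) \<Rightarrow> bool" where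
  "visc_supersol j \<Omega> u \<longleftrightarrow>
     (\<forall>x0 t0 U phi phix phixx phit.
        x0 \<in> \<Omega> \<and> t0 > 0 \<and> (x0,t0) \<in> U \<and> C21_on U phi phix phixx phit \<and>
        (\<exists>r>0. \<forall>x t. x \<in> \<Omega> \<and> t > 0 \<and> dist (x,t) (x0,t0) < r \<longrightarrow>
                  u x t - phi x t \<ge> u x0 t0 - phi x0 t0)
        \<longrightarrow> phit x0 t0 - eig_j j (phixx x0 t0) \<ge> 0)"

definition visc_sol :: "nat \<Rightarrow> (real^'n) set \<Rightarrow> (real^'n \<Rightarrow> real \<Rightarrow> real) \<Rightarrow> bool" where
  "visc_sol j \<Omega> u \<longleftrightarrow> visc_subsol j \<Omega> u \<and> visc_supersol j \<Omega> u"

definition affine_fun :: "(real^'n \<Rightarrow> real) \<Rightarrow> bool" where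
  "affine_fun p \<longleftrightarrow> (\<exists>a b. \<forall>x. p x = a \<bullet> x + b)"

end

theory Submission
  imports Defs
begin

text \<open>For \<open>j < N\<close> the function \<open>w = \<pi> + M (2(T - t) - |x - x\<^sub>c|\<^sup>2)\<^sub>+\<^sup>3\<close> is a classical
  supersolution: its Hessian is \<open>\<alpha> I + \<beta> (x - x\<^sub>c)(x - x\<^sub>c)\<^sup>T\<close> with \<open>\<alpha> = w\<^sub>t\<close>, and the
  \<open>j\<close>-dimensional subspaces orthogonal to \<open>x - x\<^sub>c\<close> give \<open>\<lambda>\<^sub>j(D\<^sup>2w) \<le> w\<^sub>t\<close> by Courant--Fischer.
  If \<open>\<Omega>\<close> lies in the ball of radius \<open>R\<close> around \<open>x\<^sub>c\<close> and \<open>2T = R\<^sup>2 + 1\<close>, then \<open>w\<close>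
  dominates \<open>u\<close> at \<open>t = 0\<close> and on the lateral boundary, so by comparison \<open>u \<le> w\<close>, and
  \<open>w = \<pi>\<close> once \<open>t > T\<close>. For \<open>j \<ge> 2\<close> every \<open>j\<close>-dimensional subspace contains a unit vector
  orthogonal to \<open>x - x\<^sub>c\<close>, so with \<open>-M\<close> in place of \<open>M\<close> the same function is a subsolution.
  Comparison with a classical (non-strict) solution is obtained by penalising the maximum of
  \<open>u - w\<close> with \<open>\<eta> / (T\<^sub>0 - t)\<close>.\<close>

section \<open>Courant--Fischer bounds\<close>

lemma dim_le_CARD: "dim (S :: (real^'n) set) \<le> CARD('n)"
  using dim_subset_UNIV[where 'a="real^'n"] by simp

lemma subspace_obtain_unit_vector:
  fixes S :: "(real^'n) set"
  assumes "subspace S" "1 \<le> dim S"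
  obtains v where "v \<in> S" "norm v = 1"
proof -
  obtain x where x: "x \<in> S" "x \<noteq> 0"
    using assms(2) dim_eq_0[of S] by fastforce
  show thesis
    by (rule that[of "x /\<^sub>R norm x"]) (use x assms(1) subspace_scale in auto)
qed

lemma subspace_obtain_orthogonal_unit_vector:
  fixes S :: "(real^'n) set"
  assumes "subspace S" "2 \<le> dim S"
  obtains u where "u \<in> S" "norm u = 1" "v \<bullet> u = 0"
proof (cases "v = 0")
  case True
  then show thesis using subspace_obtain_unit_vector[OF assms(1)] assms(2) that by force
next
  case False
  let ?H = "{x. v \<bullet> x = 0}"
  have "dim {x + y |x y. x \<in> S \<and> y \<in> ?H} + dim (S \<inter> ?H) = dim S + dim ?H"
    by (rule dim_sums_Int[OF assms(1) subspace_hyperplane])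
  moreover have "dim {x + y |x y. x \<in> S \<and> y \<in> ?H} \<le> CARD('n)" by (rule dim_le_CARD)
  ultimately have "1 \<le> dim (S \<inter> ?H)"
    using assms(2) dim_hyperplane[OF False] by simp
  then obtain u where "u \<in> S \<inter> ?H" "norm u = 1"
    using subspace_obtain_unit_vector subspace_inter[OF assms(1) subspace_hyperplane] by metis
  then show thesis using that by blast
qed

lemma hyperplane_obtain_subspace:
  fixes v :: "real^'n"
  assumes "j < CARD('n)"
  obtains S where "subspace S" "dim S = j" "S \<subseteq> {x. v \<bullet> x = 0}"
proof -
  let ?H = "{x. v \<bullet> x = 0}"
  have "j \<le> dim ?H"
    using assms dim_hyperplane[of v] by (cases "v = 0") auto
  then obtain S where "subspace S" "S \<subseteq> span ?H" "dim S = j"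
    by (rule choose_subspace_of_subspace)
  then show thesis
    using that span_eq_iff[THEN iffD2, OF subspace_hyperplane[of v]] by auto
qed

lemma quadratic_form_bounded_on_sphere:
  fixes A :: "real^'n^'n"
  obtains K where "\<And>v. norm v = 1 \<Longrightarrow> \<bar>(A *v v) \<bullet> v\<bar> \<le> K"
proof -
  obtain K where K: "\<And>x. norm (A *v x) \<le> norm x * K"
    using bounded_linear.bounded[OF matrix_vector_mul_bounded_linear[of A]] by blast
  have "\<bar>(A *v v) \<bullet> v\<bar> \<le> K" if "norm v = 1" for v
    using Cauchy_Schwarz_ineq2[of "A *v v" v] K[of v] that by simp
  then show thesis by (rule that)
qed

lemma bdd_above_quadratic_form_on_sphere:
  fixes A :: "real^'n^'n"
  shows "bdd_above ((\<lambda>v. (A *v v) \<bullet> v) ` {v \<in> S. norm v = 1})"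
proof -
  obtain K where "\<And>v. norm v = 1 \<Longrightarrow> \<bar>(A *v v) \<bullet> v\<bar> \<le> K"
    using quadratic_form_bounded_on_sphere[of A] by blast
  then show ?thesis by (force intro!: bdd_aboveI[of _ K])
qed

lemma eig_j_le_of_subspace:
  fixes A :: "real^'n^'n"
  assumes "subspace S" "dim S = j" "1 \<le> j"
    and "\<And>v. v \<in> S \<Longrightarrow> norm v = 1 \<Longrightarrow> (A *v v) \<bullet> v \<le> c"
  shows "eig_j j A \<le> c"
proof -
  obtain K where K: "\<And>v. norm v = 1 \<Longrightarrow> \<bar>(A *v v) \<bullet> v\<bar> \<le> K"
    using quadratic_form_bounded_on_sphere[of A] by blast
  define h where "h S = (SUP v \<in> {v \<in> S. norm v = 1}. (A *v v) \<bullet> v)" for S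
  have "-K \<le> h S" if S: "subspace S" "dim S = j" for S
  proof -
    obtain v where v: "v \<in> S" "norm v = 1"
      by (rule subspace_obtain_unit_vector[of S]) (use S assms(3) in auto)
    have "-K \<le> (A *v v) \<bullet> v" using K[OF v(2)] by linarith
    also have "\<dots> \<le> h S"
      unfolding h_def by (rule cSUP_upper) (use v bdd_above_quadratic_form_on_sphere in auto)
    finally show ?thesis .
  qed
  then have "eig_j j A \<le> h S"
    unfolding eig_j_def h_def[symmetric]
    by (intro cINF_lower bdd_belowI2[of _ "-K"]) (use assms(1,2) in auto)
  also have "h S \<le> c"
    unfolding h_def
    using subspace_obtain_unit_vector[OF assms(1)] assms(2,3,4) by (intro cSUP_least) auto
  finally show ?thesis .
qed

lemma eig_j_ge_of_subspaces:
  fixes A :: "real^'n^'n"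
  assumes "j \<le> CARD('n)"
    and "\<And>S. subspace S \<Longrightarrow> dim S = j \<Longrightarrow> \<exists>v\<in>S. norm v = 1 \<and> c \<le> (A *v v) \<bullet> v"
  shows "c \<le> eig_j j A"
  unfolding eig_j_def
proof (rule cINF_greatest)
  have "j \<le> dim (UNIV :: (real^'n) set)" using assms(1) by simp
  then show "{S :: (real^'n) set. subspace S \<and> dim S = j} \<noteq> {}"
    using choose_subspace_of_subspace[of j "UNIV :: (real^'n) set"] by auto
  fix S :: "(real^'n) set"
  assume "S \<in> {S. subspace S \<and> dim S = j}"
  then obtain v where v: "v \<in> S" "norm v = 1" "c \<le> (A *v v) \<bullet> v" using assms(2) by auto
  have "(A *v v) \<bullet> v \<le> (SUP v \<in> {v \<in> S. norm v = 1}. (A *v v) \<bullet> v)"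
    by (rule cSUP_upper) (use v bdd_above_quadratic_form_on_sphere in auto)
  with v(3) show "c \<le> (SUP v \<in> {v \<in> S. norm v = 1}. (A *v v) \<bullet> v)" by linarith
qed

section \<open>Rank-one perturbations of the identity\<close>

definition id_rank_one :: "real \<Rightarrow> real \<Rightarrow> real^'n \<Rightarrow> real^'n^'n" where
  "id_rank_one \<alpha> \<beta> v = (\<chi> i k. \<alpha> * (if i = k then 1 else 0) + \<beta> * (v$i * v$k))"

lemma id_rank_one_mult_vec: "id_rank_one \<alpha> \<beta> v *v h = \<alpha> *\<^sub>R h + (\<beta> * (v \<bullet> h)) *\<^sub>R v"
proof -
  have "(id_rank_one \<alpha> \<beta> v *v h)$i = \<alpha> * h$i + \<beta> * (v \<bullet> h) * v$i" for i
  proof -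
    have "(id_rank_one \<alpha> \<beta> v *v h)$i
        = (\<Sum>k\<in>UNIV. if i = k then \<alpha> * h$k else 0) + (\<Sum>k\<in>UNIV. \<beta> * v$i * (v$k * h$k))"
      unfolding id_rank_one_def matrix_vector_mult_def sum.distrib[symmetric]
      by (auto intro!: sum.cong simp: algebra_simps)
    then show ?thesis by (simp add: inner_vec_def sum_distrib_left mult_ac)
  qed
  then show ?thesis by (simp add: vec_eq_iff)
qed

lemma id_rank_one_quadratic_form_orthogonal:
  "v \<bullet> h = 0 \<Longrightarrow> (id_rank_one \<alpha> \<beta> v *v h) \<bullet> h = \<alpha> * (h \<bullet> h)"
  by (simp add: id_rank_one_mult_vec)

lemma eig_j_id_rank_one_le:
  fixes v :: "real^'n"
  assumes "1 \<le> j" "j < CARD('n)"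
  shows "eig_j j (id_rank_one \<alpha> \<beta> v) \<le> \<alpha>"
proof -
  obtain S where S: "subspace S" "dim S = j" "S \<subseteq> {x. v \<bullet> x = 0}"
    using hyperplane_obtain_subspace[OF assms(2)] by metis
  show ?thesis
    using S(3) by (intro eig_j_le_of_subspace[OF S(1,2) assms(1)])
      (auto simp: id_rank_one_quadratic_form_orthogonal dot_square_norm)
qed

lemma eig_j_id_rank_one_ge:
  fixes v :: "real^'n"
  assumes "2 \<le> j" "j \<le> CARD('n)"
  shows "\<alpha> \<le> eig_j j (id_rank_one \<alpha> \<beta> v)"
proof (rule eig_j_ge_of_subspaces[OF assms(2)])
  fix S :: "(real^'n) set"
  assume "subspace S" "dim S = j"
  then obtain u where "u \<in> S" "norm u = 1" "v \<bullet> u = 0"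
    using subspace_obtain_orthogonal_unit_vector assms(1) by metis
  then show "\<exists>u\<in>S. norm u = 1 \<and> \<alpha> \<le> (id_rank_one \<alpha> \<beta> v *v u) \<bullet> u"
    by (auto simp: id_rank_one_quadratic_form_orthogonal dot_square_norm)
qed

lemma continuous_on_id_rank_one [continuous_intros]:
  assumes "continuous_on S a" "continuous_on S b" "continuous_on S v"
  shows "continuous_on S (\<lambda>z. id_rank_one (a z) (b z) (v z))"
  unfolding id_rank_one_def
  by (intro continuous_on_vec_lambda continuous_intros continuous_on_component assms)

section \<open>The barrier\<close>

definition pos_pow :: "nat \<Rightarrow> real \<Rightarrow> real" where
  "pos_pow n y = (max 0 y) ^ n"

lemma pos_pow_nonneg: "0 \<le> pos_pow n y"
  by (simp add: pos_pow_def)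

lemma continuous_on_pos_pow [continuous_intros]:
  "continuous_on S f \<Longrightarrow> continuous_on S (\<lambda>x. pos_pow n (f x))"
  unfolding pos_pow_def by (intro continuous_intros)

lemma has_real_derivative_pos_pow:
  assumes "2 \<le> n"
  shows "(pos_pow n has_real_derivative real n * pos_pow (n - 1) y) (at y)"
proof -
  consider "0 < y" | "y < 0" | "y = 0" by linarith
  then show ?thesis
  proof cases
    case 1
    have "((\<lambda>y. y ^ n) has_real_derivative real n * pos_pow (n - 1) y) (at y)"
      using DERIV_pow[of n y] 1 by (simp add: pos_pow_def)
    then show ?thesis
      by (rule has_field_derivative_transform_within_open[where S="{0<..}"])
        (use 1 in \<open>auto simp: pos_pow_def\<close>)
  next
    case 2
    have "((\<lambda>y. 0) has_real_derivative real n * pos_pow (n - 1) y) (at y)"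
      using 2 assms by (simp add: pos_pow_def power_0_left)
    then show ?thesis
      by (rule has_field_derivative_transform_within_open[where S="{..<0}"])
        (use 2 assms in \<open>auto simp: pos_pow_def\<close>)
  next
    case 3
    have bound: "norm ((pos_pow n z - pos_pow n 0) / (z - 0)) \<le> \<bar>z\<bar> ^ (n - 1)" for z
    proof (cases "0 < z")
      case True
      then have "pos_pow n z / z = z ^ (n - 1)"
        using assms by (simp add: pos_pow_def power_eq_if)
      then show ?thesis using True assms by (simp add: pos_pow_def power_0_left)
    qed (use assms in \<open>simp add: pos_pow_def power_0_left\<close>)
    have "((\<lambda>z::real. \<bar>z\<bar> ^ (n - 1)) \<longlongrightarrow> \<bar>0\<bar> ^ (n - 1)) (at 0)"
      by (intro tendsto_intros)
    then have "((\<lambda>z::real. \<bar>z\<bar> ^ (n - 1)) \<longlongrightarrow> 0) (at 0)"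
      using assms by (simp add: power_0_left)
    then have "((\<lambda>z. (pos_pow n z - pos_pow n 0) / (z - 0)) \<longlongrightarrow> 0) (at 0)"
      by (rule Lim_null_comparison[OF always_eventually[OF allI[OF bound]]])
    then have "(pos_pow n has_real_derivative 0) (at 0)"
      unfolding has_field_derivative_iff .
    then show ?thesis
      using 3 assms by (simp add: pos_pow_def power_0_left)
  qed
qed

lemma has_derivative_pos_pow_comp:
  assumes "2 \<le> n" "(f has_derivative f') (at x)"
  shows "((\<lambda>x. pos_pow n (f x)) has_derivative (\<lambda>h. real n * pos_pow (n - 1) (f x) * f' h))
    (at x)"
  using has_derivative_compose[OF assms(2) has_real_derivative_pos_pow[OF assms(1), of "f x",
      unfolded has_field_derivative_def]] .

definition paraboloid :: "real^'n \<Rightarrow> real \<Rightarrow> real^'n \<Rightarrow> real \<Rightarrow> real" where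
  "paraboloid xc T x t = 2 * (T - t) - (x - xc) \<bullet> (x - xc)"

definition bump :: "real \<Rightarrow> real^'n \<Rightarrow> real \<Rightarrow> real^'n \<Rightarrow> real \<Rightarrow> real" where
  "bump c xc T x t = c * pos_pow 3 (paraboloid xc T x t)"

definition bump_dx :: "real \<Rightarrow> real^'n \<Rightarrow> real \<Rightarrow> real^'n \<Rightarrow> real \<Rightarrow> real^'n" where
  "bump_dx c xc T x t = (- 6 * c * pos_pow 2 (paraboloid xc T x t)) *\<^sub>R (x - xc)"

definition bump_dxx :: "real \<Rightarrow> real^'n \<Rightarrow> real \<Rightarrow> real^'n \<Rightarrow> real \<Rightarrow> real^'n^'n" where
  "bump_dxx c xc T x t = id_rank_one (- 6 * c * pos_pow 2 (paraboloid xc T x t))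
      (24 * c * pos_pow 1 (paraboloid xc T x t)) (x - xc)"

definition bump_dt :: "real \<Rightarrow> real^'n \<Rightarrow> real \<Rightarrow> real^'n \<Rightarrow> real \<Rightarrow> real" where
  "bump_dt c xc T x t = - 6 * c * pos_pow 2 (paraboloid xc T x t)"

lemma has_derivative_paraboloid:
  "((\<lambda>y. paraboloid xc T y t) has_derivative (\<lambda>h. - 2 * ((x - xc) \<bullet> h))) (at x)"
  unfolding paraboloid_def
  by (auto intro!: derivative_eq_intros simp: inner_commute)

lemma has_derivative_bump:
  "((\<lambda>y. bump c xc T y t) has_derivative (\<lambda>h. bump_dx c xc T x t \<bullet> h)) (at x)"
proof -
  have "((\<lambda>y. c * pos_pow 3 (paraboloid xc T y t)) has_derivative
      (\<lambda>h. c * (real 3 * pos_pow (3 - 1) (paraboloid xc T x t) * (- 2 * ((x - xc) \<bullet> h))))) (at x)"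
    by (intro has_derivative_mult_right has_derivative_pos_pow_comp has_derivative_paraboloid) simp
  then show ?thesis
    unfolding bump_def by (rule has_derivative_eq_rhs) (simp add: fun_eq_iff bump_dx_def)
qed

lemma has_derivative_bump_dx:
  "((\<lambda>y. bump_dx c xc T y t) has_derivative (\<lambda>h. bump_dxx c xc T x t *v h)) (at x)"
proof -
  have "((\<lambda>y. pos_pow 2 (paraboloid xc T y t)) has_derivative
      (\<lambda>h. real 2 * pos_pow (2 - 1) (paraboloid xc T x t) * (- 2 * ((x - xc) \<bullet> h)))) (at x)"
    by (rule has_derivative_pos_pow_comp[OF _ has_derivative_paraboloid]) simp
  then have factor: "((\<lambda>y. - 6 * c * pos_pow 2 (paraboloid xc T y t)) has_derivative
      (\<lambda>h. - 6 * c * (real 2 * pos_pow (2 - 1) (paraboloid xc T x t) * (- 2 * ((x - xc) \<bullet> h)))))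
      (at x)"
    by (rule has_derivative_mult_right)
  have "((\<lambda>y. (- 6 * c * pos_pow 2 (paraboloid xc T y t)) *\<^sub>R (y - xc)) has_derivative
      (\<lambda>h. (- 6 * c * pos_pow 2 (paraboloid xc T x t)) *\<^sub>R (h - 0) +
        (- 6 * c * (real 2 * pos_pow (2 - 1) (paraboloid xc T x t) * (- 2 * ((x - xc) \<bullet> h))))
          *\<^sub>R (x - xc))) (at x)"
    by (rule has_derivative_scaleR[OF factor
          has_derivative_diff[OF has_derivative_ident has_derivative_const]])
  then show ?thesis
    unfolding bump_dx_def
    by (rule has_derivative_eq_rhs)
      (simp only: bump_dxx_def id_rank_one_mult_vec, simp add: fun_eq_iff)
qed

lemma has_real_derivative_bump:
  "((\<lambda>s. bump c xc T x s) has_real_derivative bump_dt c xc T x t) (at t)"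
proof -
  have "((\<lambda>s. paraboloid xc T x s) has_real_derivative - 2) (at t)"
    unfolding paraboloid_def by (auto intro!: derivative_eq_intros)
  from DERIV_chain2[OF has_real_derivative_pos_pow[of 3] this]
  have "((\<lambda>s. pos_pow 3 (paraboloid xc T x s)) has_real_derivative
      real 3 * pos_pow (3 - 1) (paraboloid xc T x t) * - 2) (at t)"
    by simp
  then show ?thesis
    unfolding bump_def bump_dt_def by (rule DERIV_cmult[THEN DERIV_cong]) simp
qed

lemma C21_on_bump: "C21_on UNIV (bump c xc T) (bump_dx c xc T) (bump_dxx c xc T) (bump_dt c xc T)"
proof -
  have "continuous_on UNIV (\<lambda>(x, t). bump c xc T x t)"
    and "continuous_on UNIV (\<lambda>(x, t). bump_dx c xc T x t)"
    and "continuous_on UNIV (\<lambda>(x, t). bump_dxx c xc T x t)"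
    and "continuous_on UNIV (\<lambda>(x, t). bump_dt c xc T x t)"
    unfolding case_prod_unfold bump_def bump_dx_def bump_dxx_def bump_dt_def paraboloid_def
    by (intro continuous_intros)+
  then show ?thesis
    using has_derivative_bump has_derivative_bump_dx has_real_derivative_bump
    unfolding C21_on_def by auto
qed

lemma eig_j_bump_dxx_le:
  fixes xc :: "real^'n"
  assumes "1 \<le> j" "j < CARD('n)"
  shows "eig_j j (bump_dxx c xc T x t) \<le> bump_dt c xc T x t"
  unfolding bump_dxx_def bump_dt_def by (rule eig_j_id_rank_one_le[OF assms])

lemma eig_j_bump_dxx_ge:
  fixes xc :: "real^'n"
  assumes "2 \<le> j" "j \<le> CARD('n)"
  shows "bump_dt c xc T x t \<le> eig_j j (bump_dxx c xc T x t)"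
  unfolding bump_dxx_def bump_dt_def by (rule eig_j_id_rank_one_ge[OF assms])

lemma pos_pow_paraboloid_initial_ge_one:
  assumes "(x - xc) \<bullet> (x - xc) \<le> 2 * T - 1"
  shows "1 \<le> pos_pow 3 (paraboloid xc T x 0)"
  using assms by (simp add: pos_pow_def paraboloid_def)

lemma bump_eq_0_after:
  assumes "T < t"
  shows "bump c xc T x t = 0"
proof -
  have "paraboloid xc T x t < 0"
    using assms inner_ge_zero[of "x - xc"] unfolding paraboloid_def by argo
  then show ?thesis by (simp add: bump_def pos_pow_def)
qed

section \<open>Comparison with classical sub- and supersolutions\<close>

lemma C21_on_add_affine:
  assumes "C21_on U w wx wxx wt"
  shows "C21_on U (\<lambda>x t. a \<bullet> x + b + w x t) (\<lambda>x t. a + wx x t) wxx wt"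
proof -
  have "((\<lambda>y. a \<bullet> y + b + w y t) has_derivative (\<lambda>h. (a + wx x t) \<bullet> h)) (at x) \<and>
      ((\<lambda>y. a + wx y t) has_derivative (\<lambda>h. wxx x t *v h)) (at x) \<and>
      ((\<lambda>s. a \<bullet> x + b + w x s) has_real_derivative wt x t) (at t)"
    if "(x, t) \<in> U" for x t
  proof (intro conjI)
    have w: "((\<lambda>y. w y t) has_derivative (\<lambda>h. wx x t \<bullet> h)) (at x)"
      and wx: "((\<lambda>y. wx y t) has_derivative (\<lambda>h. wxx x t *v h)) (at x)"
      and wt: "((\<lambda>s. w x s) has_real_derivative wt x t) (at t)"
      using assms that unfolding C21_on_def by auto
    have "((\<lambda>y. a \<bullet> y + b + w y t) has_derivative (\<lambda>h. a \<bullet> h + 0 + wx x t \<bullet> h)) (at x)"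
      by (intro has_derivative_add has_derivative_const has_derivative_inner_right
          has_derivative_ident w)
    then show "((\<lambda>y. a \<bullet> y + b + w y t) has_derivative (\<lambda>h. (a + wx x t) \<bullet> h)) (at x)"
      by (simp add: inner_add_left)
    show "((\<lambda>y. a + wx y t) has_derivative (\<lambda>h. wxx x t *v h)) (at x)"
      using has_derivative_add[OF has_derivative_const wx] by simp
    show "((\<lambda>s. a \<bullet> x + b + w x s) has_real_derivative wt x t) (at t)"
      using DERIV_add[OF DERIV_const wt] by simp
  qed
  moreover have "continuous_on U (\<lambda>(x, t). a \<bullet> x + b + w x t)"
    and "continuous_on U (\<lambda>(x, t). a + wx x t)"
    using assms unfolding C21_on_def case_prod_unfold
    by (auto intro!: continuous_on_add continuous_on_inner continuous_on_fst continuous_on_id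
        continuous_on_const)
  ultimately show ?thesis
    using assms unfolding C21_on_def by auto
qed

lemma C21_on_add_time_penalty:
  assumes "C21_on UNIV w wx wxx wt"
  shows "C21_on (UNIV \<times> {..<T}) (\<lambda>x t. w x t + c / (T - t)) wx wxx
    (\<lambda>x t. wt x t + c / (T - t)\<^sup>2)"
proof -
  have "((\<lambda>s. w x s + c / (T - s)) has_real_derivative wt x t + c / (T - t)\<^sup>2) (at t)"
    if "t < T" for x t
  proof -
    have "((\<lambda>s. c / (T - s)) has_real_derivative c / (T - t)\<^sup>2) (at t)"
      using that by (auto intro!: derivative_eq_intros simp: power2_eq_square)
    then show ?thesis
      using assms unfolding C21_on_def by (intro DERIV_add) auto
  qed
  moreover have "continuous_on (UNIV \<times> {..<T}) (\<lambda>(x, t). w x t + c / (T - t))"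
    and "continuous_on (UNIV \<times> {..<T}) (\<lambda>(x, t). wt x t + c / (T - t)\<^sup>2)"
    using assms unfolding C21_on_def case_prod_unfold
    by (auto intro!: continuous_on_add continuous_on_divide continuous_on_diff continuous_on_power
        continuous_on_snd continuous_on_const intro: continuous_on_subset)
  ultimately show ?thesis
    using assms unfolding C21_on_def
    by (auto intro: continuous_on_subset simp: open_Times has_derivative_add_const)
qed

lemma penalized_max_attained:
  fixes F :: "'a::topological_space \<times> real \<Rightarrow> real"
  assumes "compact K" and F: "continuous_on (K \<times> {0..T}) F"
    and z1: "z1 \<in> K \<times> {0..<T}" and "0 < \<eta>"
  obtains z0 where "z0 \<in> K \<times> {0..<T}"
    "\<And>z. z \<in> K \<times> {0..<T} \<Longrightarrow> F z - \<eta> / (T - snd z) \<le> F z0 - \<eta> / (T - snd z0)"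
proof -
  define \<psi> where "\<psi> z = F z - \<eta> / (T - snd z)" for z
  have "compact (K \<times> {0..T})" "K \<times> {0..T} \<noteq> {}"
    using assms(1) z1 by (auto intro: compact_Times)
  then obtain zB where zB: "\<And>z. z \<in> K \<times> {0..T} \<Longrightarrow> F z \<le> F zB"
    using continuous_attains_sup[OF _ _ F] by metis
  \<comment> \<open>past \<open>T - \<delta>\<close> the penalty exceeds the oscillation of \<open>F\<close>, so \<open>\<psi>\<close> stays below \<open>\<psi> z1\<close>\<close>
  define \<delta> where "\<delta> = \<eta> / (F zB - \<psi> z1)"
  have pen: "0 < \<eta> / (T - snd z1)" using z1 \<open>0 < \<eta>\<close> by auto
  have gap: "\<eta> / (T - snd z1) \<le> F zB - \<psi> z1"
    using zB[of z1] z1 unfolding \<psi>_def by auto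
  have "0 < \<delta>" unfolding \<delta>_def using pen gap \<open>0 < \<eta>\<close> by simp
  have "\<delta> \<le> \<eta> / (\<eta> / (T - snd z1))"
    unfolding \<delta>_def using pen gap \<open>0 < \<eta>\<close> by (intro divide_left_mono mult_pos_pos) auto
  also have "\<dots> = T - snd z1" using z1 \<open>0 < \<eta>\<close> by auto
  finally have z1': "z1 \<in> K \<times> {0..T - \<delta>}" using z1 \<open>0 < \<eta>\<close> by auto
  have "compact (K \<times> {0..T - \<delta>})" using assms(1) by (auto intro: compact_Times)
  moreover have "continuous_on (K \<times> {0..T - \<delta>}) \<psi>"
    unfolding \<psi>_def using \<open>0 < \<delta>\<close>
    by (intro continuous_intros continuous_on_subset[OF F]) auto
  ultimately obtain z0 where z0: "z0 \<in> K \<times> {0..T - \<delta>}"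
    "\<And>z. z \<in> K \<times> {0..T - \<delta>} \<Longrightarrow> \<psi> z \<le> \<psi> z0"
    using continuous_attains_sup[of "K \<times> {0..T - \<delta>}" \<psi>] z1' by blast
  have "\<psi> z \<le> \<psi> z0" if z: "z \<in> K \<times> {0..<T}" for z
  proof (cases "snd z \<le> T - \<delta>")
    case True
    then show ?thesis using z z0(2) by (cases z) auto
  next
    case False
    have "\<eta> / \<delta> \<le> \<eta> / (T - snd z)"
      using False z \<open>0 < \<eta>\<close> \<open>0 < \<delta>\<close> by (intro divide_left_mono) auto
    moreover have "\<eta> / \<delta> = F zB - \<psi> z1"
      unfolding \<delta>_def using pen gap \<open>0 < \<eta>\<close> by simp
    moreover have "F z \<le> F zB" using z by (intro zB) auto
    ultimately show ?thesis using z0(2)[OF z1'] unfolding \<psi>_def by linarith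
  qed
  moreover have "z0 \<in> K \<times> {0..<T}" using z0(1) \<open>0 < \<delta>\<close> by auto
  ultimately show thesis using that unfolding \<psi>_def by blast
qed

lemma penalized_max_point_interior:
  fixes f g :: "'a::heine_borel \<Rightarrow> real \<Rightarrow> real"
  assumes "bounded \<Omega>"
    and cont: "continuous_on (closure \<Omega> \<times> {0..}) (\<lambda>(x, t). f x t - g x t)"
    and lateral: "\<And>x t. x \<in> frontier \<Omega> \<Longrightarrow> 0 < t \<Longrightarrow> f x t \<le> g x t"
    and initial: "\<And>x. x \<in> closure \<Omega> \<Longrightarrow> f x 0 \<le> g x 0"
    and x1: "x1 \<in> closure \<Omega>" and t1: "0 \<le> t1" and gt: "g x1 t1 < f x1 t1"
  obtains x0 t0 T \<eta> where "x0 \<in> \<Omega>" "0 < t0" "t0 < T" "0 < \<eta>"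
    "\<And>x t. x \<in> \<Omega> \<Longrightarrow> 0 < t \<Longrightarrow> t < T \<Longrightarrow>
       f x t - g x t - \<eta> / (T - t) \<le> f x0 t0 - g x0 t0 - \<eta> / (T - t0)"
proof -
  define d where "d = f x1 t1 - g x1 t1"
  define F where "F z = f (fst z) (snd z) - g (fst z) (snd z)" for z
  define \<psi> where "\<psi> z = F z - (d / 2) / (t1 + 1 - snd z)" for z
  have "0 < d" using gt unfolding d_def by simp
  have "continuous_on (closure \<Omega> \<times> {0..t1 + 1}) F"
    unfolding F_def by (rule continuous_on_subset[OF cont[unfolded case_prod_unfold]]) auto
  then obtain z0 where z0: "z0 \<in> closure \<Omega> \<times> {0..<t1 + 1}"
    and max: "\<And>z. z \<in> closure \<Omega> \<times> {0..<t1 + 1} \<Longrightarrow> \<psi> z \<le> \<psi> z0"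
    using penalized_max_attained[of "closure \<Omega>" "t1 + 1" F "(x1, t1)" "d / 2"]
      \<open>bounded \<Omega>\<close> x1 t1 \<open>0 < d\<close> unfolding \<psi>_def by auto
  obtain x0 t0 where z0_eq: "z0 = (x0, t0)" by fastforce
  have "\<psi> (x1, t1) = d / 2" unfolding \<psi>_def F_def d_def by (simp add: field_simps)
  then have "d / 2 \<le> \<psi> z0" using max[of "(x1, t1)"] x1 t1 by simp
  then have "0 < \<psi> z0" using \<open>0 < d\<close> by linarith
  have "0 < t0"
  proof (rule ccontr)
    assume "\<not> 0 < t0"
    then have "t0 = 0" using z0 z0_eq by auto
    then have "\<psi> z0 \<le> - (d / 2) / (t1 + 1)"
      using initial[of x0] z0 z0_eq unfolding \<psi>_def F_def by auto
    moreover have "0 < (d / 2) / (t1 + 1)" using \<open>0 < d\<close> t1 by simp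
    ultimately show False using \<open>0 < \<psi> z0\<close> by linarith
  qed
  have "x0 \<in> \<Omega>"
  proof (rule ccontr)
    assume "x0 \<notin> \<Omega>"
    then have "x0 \<in> frontier \<Omega>" using z0 z0_eq closure_Un_frontier by auto
    then have "\<psi> z0 \<le> - (d / 2) / (t1 + 1 - t0)"
      using lateral[of x0 t0] \<open>0 < t0\<close> z0_eq unfolding \<psi>_def F_def by auto
    moreover have "0 < (d / 2) / (t1 + 1 - t0)" using \<open>0 < d\<close> z0 z0_eq by simp
    ultimately show False using \<open>0 < \<psi> z0\<close> by linarith
  qed
  show thesis
  proof (rule that[of x0 t0 "t1 + 1" "d / 2"])
    show "x0 \<in> \<Omega>" "0 < t0" "t0 < t1 + 1" "0 < d / 2"
      using \<open>x0 \<in> \<Omega>\<close> \<open>0 < t0\<close> \<open>0 < d\<close> z0 z0_eq by auto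
    fix x t assume "x \<in> \<Omega>" "0 < t" "t < t1 + 1"
    then show "f x t - g x t - d / 2 / (t1 + 1 - t) \<le>
        f x0 t0 - g x0 t0 - d / 2 / (t1 + 1 - t0)"
      using max[of "(x, t)"] closure_subset unfolding \<psi>_def F_def z0_eq by auto
  qed
qed

lemma visc_subsolD:
  assumes "visc_subsol j \<Omega> u" "x0 \<in> \<Omega>" "0 < t0" "(x0, t0) \<in> U"
    and "C21_on U phi phix phixx phit"
    and "\<exists>r>0. \<forall>x t. x \<in> \<Omega> \<and> 0 < t \<and> dist (x, t) (x0, t0) < r \<longrightarrow>
      u x t - phi x t \<le> u x0 t0 - phi x0 t0"
  shows "phit x0 t0 \<le> eig_j j (phixx x0 t0)"
  using assms(1)[unfolded visc_subsol_def, rule_format, of x0 t0 U phi phix phixx phit] assms(2-)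
  by auto

lemma visc_supersolD:
  assumes "visc_supersol j \<Omega> u" "x0 \<in> \<Omega>" "0 < t0" "(x0, t0) \<in> U"
    and "C21_on U phi phix phixx phit"
    and "\<exists>r>0. \<forall>x t. x \<in> \<Omega> \<and> 0 < t \<and> dist (x, t) (x0, t0) < r \<longrightarrow>
      u x0 t0 - phi x0 t0 \<le> u x t - phi x t"
  shows "eig_j j (phixx x0 t0) \<le> phit x0 t0"
  using assms(1)[unfolded visc_supersol_def, rule_format, of x0 t0 U phi phix phixx phit] assms(2-)
  by auto

lemma time_lt_of_dist_lt:
  fixes t t0 T :: real
  assumes "dist (x, t) (x0, t0) < T - t0"
  shows "t < T"
  using dist_snd_le[of "(x, t)" "(x0, t0)"] assms by (simp add: dist_real_def)

lemma visc_subsol_le_classical_supersol: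
  fixes u w :: "real^'n \<Rightarrow> real \<Rightarrow> real"
  assumes "bounded \<Omega>"
    and u_cont: "continuous_on (closure \<Omega> \<times> {0..}) (\<lambda>(x, t). u x t)"
    and sub: "visc_subsol j \<Omega> u"
    and w: "C21_on UNIV w wx wxx wt"
    and super: "\<And>x t. eig_j j (wxx x t) \<le> wt x t"
    and lateral: "\<And>x t. x \<in> frontier \<Omega> \<Longrightarrow> 0 < t \<Longrightarrow> u x t \<le> w x t"
    and initial: "\<And>x. x \<in> closure \<Omega> \<Longrightarrow> u x 0 \<le> w x 0"
    and "x \<in> closure \<Omega>" "0 \<le> t"
  shows "u x t \<le> w x t"
proof (rule ccontr)
  assume "\<not> u x t \<le> w x t"
  then have gt: "w x t < u x t" by simp
  have "continuous_on UNIV (\<lambda>(x, t). w x t)" using w unfolding C21_on_def by blast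
  then have w_cont: "continuous_on (closure \<Omega> \<times> {0..}) (\<lambda>(x, t). w x t)"
    by (rule continuous_on_subset) simp
  have cont: "continuous_on (closure \<Omega> \<times> {0..}) (\<lambda>(x, t). u x t - w x t)"
    using continuous_on_diff[OF u_cont w_cont] by (simp add: case_prod_unfold)
  obtain x0 t0 T \<eta> where max: "x0 \<in> \<Omega>" "0 < t0" "t0 < T" "0 < \<eta>"
    "\<And>x t. x \<in> \<Omega> \<Longrightarrow> 0 < t \<Longrightarrow> t < T \<Longrightarrow>
       u x t - w x t - \<eta> / (T - t) \<le> u x0 t0 - w x0 t0 - \<eta> / (T - t0)"
    by (rule penalized_max_point_interior[of \<Omega> u w x t])
      (use \<open>bounded \<Omega>\<close> cont lateral initial assms(8,9) gt that in auto)
  have "wt x0 t0 + \<eta> / (T - t0)\<^sup>2 \<le> eig_j j (wxx x0 t0)"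
  proof (rule visc_subsolD[OF sub max(1,2) _ C21_on_add_time_penalty[OF w]])
    show "(x0, t0) \<in> UNIV \<times> {..<T}" using max(3) by simp
    show "\<exists>r>0. \<forall>x t. x \<in> \<Omega> \<and> 0 < t \<and> dist (x, t) (x0, t0) < r \<longrightarrow>
        u x t - (w x t + \<eta> / (T - t)) \<le> u x0 t0 - (w x0 t0 + \<eta> / (T - t0))"
      (is "\<exists>r>0. \<forall>x t. _ \<longrightarrow> ?P x t")
    proof (intro exI[of _ "T - t0"] conjI allI impI)
      fix y s assume "y \<in> \<Omega> \<and> 0 < s \<and> dist (y, s) (x0, t0) < T - t0"
      then show "?P y s" using max(5)[of y s] time_lt_of_dist_lt[of y s x0 t0 T] by auto
    qed (use max(3) in simp)
  qed
  moreover have "0 < \<eta> / (T - t0)\<^sup>2" using max(3,4) by simp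
  ultimately show False using super[of x0 t0] by linarith
qed

lemma visc_supersol_ge_classical_subsol:
  fixes u w :: "real^'n \<Rightarrow> real \<Rightarrow> real"
  assumes "bounded \<Omega>"
    and u_cont: "continuous_on (closure \<Omega> \<times> {0..}) (\<lambda>(x, t). u x t)"
    and super: "visc_supersol j \<Omega> u"
    and w: "C21_on UNIV w wx wxx wt"
    and sub: "\<And>x t. wt x t \<le> eig_j j (wxx x t)"
    and lateral: "\<And>x t. x \<in> frontier \<Omega> \<Longrightarrow> 0 < t \<Longrightarrow> w x t \<le> u x t"
    and initial: "\<And>x. x \<in> closure \<Omega> \<Longrightarrow> w x 0 \<le> u x 0"
    and "x \<in> closure \<Omega>" "0 \<le> t"
  shows "w x t \<le> u x t"
proof (rule ccontr)
  assume "\<not> w x t \<le> u x t"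
  then have gt: "u x t < w x t" by simp
  have "continuous_on UNIV (\<lambda>(x, t). w x t)" using w unfolding C21_on_def by blast
  then have w_cont: "continuous_on (closure \<Omega> \<times> {0..}) (\<lambda>(x, t). w x t)"
    by (rule continuous_on_subset) simp
  have cont: "continuous_on (closure \<Omega> \<times> {0..}) (\<lambda>(x, t). w x t - u x t)"
    using continuous_on_diff[OF w_cont u_cont] by (simp add: case_prod_unfold)
  obtain x0 t0 T \<eta> where max: "x0 \<in> \<Omega>" "0 < t0" "t0 < T" "0 < \<eta>"
    "\<And>x t. x \<in> \<Omega> \<Longrightarrow> 0 < t \<Longrightarrow> t < T \<Longrightarrow>
       w x t - u x t - \<eta> / (T - t) \<le> w x0 t0 - u x0 t0 - \<eta> / (T - t0)"
    by (rule penalized_max_point_interior[of \<Omega> w u x t])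
      (use \<open>bounded \<Omega>\<close> cont lateral initial assms(8,9) gt that in auto)
  have "eig_j j (wxx x0 t0) \<le> wt x0 t0 + - \<eta> / (T - t0)\<^sup>2"
  proof (rule visc_supersolD[OF super max(1,2) _ C21_on_add_time_penalty[OF w]])
    show "(x0, t0) \<in> UNIV \<times> {..<T}" using max(3) by simp
    show "\<exists>r>0. \<forall>x t. x \<in> \<Omega> \<and> 0 < t \<and> dist (x, t) (x0, t0) < r \<longrightarrow>
        u x0 t0 - (w x0 t0 + - \<eta> / (T - t0)) \<le> u x t - (w x t + - \<eta> / (T - t))"
      (is "\<exists>r>0. \<forall>x t. _ \<longrightarrow> ?P x t")
    proof (intro exI[of _ "T - t0"] conjI allI impI)
      fix y s assume "y \<in> \<Omega> \<and> 0 < s \<and> dist (y, s) (x0, t0) < T - t0"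
      then show "?P y s" using max(5)[of y s] time_lt_of_dist_lt[of y s x0 t0 T] by auto
    qed (use max(3) in simp)
  qed
  moreover have "0 < \<eta> / (T - t0)\<^sup>2" using max(3,4) by simp
  ultimately show False using sub[of x0 t0] by linarith
qed

section \<open>Convergence to the affine solution\<close>

lemma bounded_obtain_horizon:
  fixes S :: "'a::real_inner set"
  assumes "bounded S"
  obtains xc T where "0 < T" "\<And>x. x \<in> closure S \<Longrightarrow> (x - xc) \<bullet> (x - xc) \<le> 2 * T - 1"
proof -
  obtain xc R where R: "closure S \<subseteq> cball xc R"
    using bounded_closure[OF assms] unfolding bounded_subset_cball by blast
  have "(x - xc) \<bullet> (x - xc) \<le> 2 * ((R\<^sup>2 + 1) / 2) - 1" if "x \<in> closure S" for x
  proof -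
    have "norm (x - xc) \<le> R" using R that by (auto simp: dist_norm norm_minus_commute)
    then have "(norm (x - xc))\<^sup>2 \<le> R\<^sup>2" by (intro power_mono) auto
    moreover have "2 * ((R\<^sup>2 + 1) / 2) - 1 = R\<^sup>2" by (simp add: field_simps)
    ultimately show ?thesis by (simp add: power2_norm_eq_inner)
  qed
  moreover have "0 < (R\<^sup>2 + 1) / 2" by (simp add: add_nonneg_pos)
  ultimately show thesis using that by blast
qed

lemma continuous_on_compact_obtain_abs_bound:
  fixes f :: "'a::topological_space \<Rightarrow> real"
  assumes "continuous_on K f" "compact K"
  obtains M where "0 \<le> M" "\<And>x. x \<in> K \<Longrightarrow> \<bar>f x\<bar> \<le> M"
proof -
  have "bounded (f ` K)" by (rule compact_imp_bounded[OF compact_continuous_image[OF assms]])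
  then obtain M where "\<And>x. x \<in> K \<Longrightarrow> \<bar>f x\<bar> \<le> M" unfolding bounded_real by (meson imageI)
  then show thesis by (intro that[of "max M 0"]) (simp, meson max.coboundedI1)
qed

lemma visc_subsol_le_affine_after_horizon:
  fixes u :: "real^'n \<Rightarrow> real \<Rightarrow> real"
  assumes "bounded \<Omega>" "1 \<le> j" "j < CARD('n)"
    and u_cont: "continuous_on (closure \<Omega> \<times> {0..}) (\<lambda>(x, t). u x t)"
    and sub: "visc_subsol j \<Omega> u"
    and lateral: "\<And>x t. x \<in> frontier \<Omega> \<Longrightarrow> 0 < t \<Longrightarrow> u x t = a \<bullet> x + b"
    and initial: "\<And>x. x \<in> closure \<Omega> \<Longrightarrow> u x 0 \<le> a \<bullet> x + b + M" and "0 \<le> M"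
    and horizon: "\<And>x. x \<in> closure \<Omega> \<Longrightarrow> (x - xc) \<bullet> (x - xc) \<le> 2 * T - 1"
    and "x \<in> \<Omega>" "T < t"
  shows "u x t \<le> a \<bullet> x + b"
proof -
  have "u x t \<le> a \<bullet> x + b + bump M xc T x t"
  proof (rule visc_subsol_le_classical_supersol[OF \<open>bounded \<Omega>\<close> u_cont sub
        C21_on_add_affine[OF C21_on_bump]])
    show "eig_j j (bump_dxx M xc T y s) \<le> bump_dt M xc T y s" for y s
      by (rule eig_j_bump_dxx_le[OF assms(2,3)])
    show "u y s \<le> a \<bullet> y + b + bump M xc T y s" if "y \<in> frontier \<Omega>" "0 < s" for y s
      using lateral[OF that] \<open>0 \<le> M\<close> pos_pow_nonneg by (simp add: bump_def)
    show "u y 0 \<le> a \<bullet> y + b + bump M xc T y 0" if "y \<in> closure \<Omega>" for y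
    proof -
      have "M * 1 \<le> bump M xc T y 0"
        unfolding bump_def using pos_pow_paraboloid_initial_ge_one[OF horizon[OF that]] \<open>0 \<le> M\<close>
        by (rule mult_left_mono)
      then show ?thesis using initial[OF that] by simp
    qed
    show x: "x \<in> closure \<Omega>" using \<open>x \<in> \<Omega>\<close> closure_subset by blast
    have "0 \<le> (x - xc) \<bullet> (x - xc)" by simp
    then show "0 \<le> t" using horizon[OF x] \<open>T < t\<close> by argo
  qed
  then show ?thesis by (simp add: bump_eq_0_after[OF \<open>T < t\<close>])
qed

lemma visc_supersol_ge_affine_after_horizon:
  fixes u :: "real^'n \<Rightarrow> real \<Rightarrow> real"
  assumes "bounded \<Omega>" "2 \<le> j" "j \<le> CARD('n)"
    and u_cont: "continuous_on (closure \<Omega> \<times> {0..}) (\<lambda>(x, t). u x t)"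
    and super: "visc_supersol j \<Omega> u"
    and lateral: "\<And>x t. x \<in> frontier \<Omega> \<Longrightarrow> 0 < t \<Longrightarrow> u x t = a \<bullet> x + b"
    and initial: "\<And>x. x \<in> closure \<Omega> \<Longrightarrow> a \<bullet> x + b - M \<le> u x 0" and "0 \<le> M"
    and horizon: "\<And>x. x \<in> closure \<Omega> \<Longrightarrow> (x - xc) \<bullet> (x - xc) \<le> 2 * T - 1"
    and "x \<in> \<Omega>" "T < t"
  shows "a \<bullet> x + b \<le> u x t"
proof -
  have "a \<bullet> x + b + bump (- M) xc T x t \<le> u x t"
  proof (rule visc_supersol_ge_classical_subsol[OF \<open>bounded \<Omega>\<close> u_cont super
        C21_on_add_affine[OF C21_on_bump]])
    show "bump_dt (- M) xc T y s \<le> eig_j j (bump_dxx (- M) xc T y s)" for y s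
      by (rule eig_j_bump_dxx_ge[OF assms(2,3)])
    show "a \<bullet> y + b + bump (- M) xc T y s \<le> u y s" if "y \<in> frontier \<Omega>" "0 < s" for y s
      using lateral[OF that] \<open>0 \<le> M\<close> pos_pow_nonneg by (simp add: bump_def)
    show "a \<bullet> y + b + bump (- M) xc T y 0 \<le> u y 0" if "y \<in> closure \<Omega>" for y
    proof -
      have "M * 1 \<le> M * pos_pow 3 (paraboloid xc T y 0)"
        using pos_pow_paraboloid_initial_ge_one[OF horizon[OF that]] \<open>0 \<le> M\<close>
        by (rule mult_left_mono)
      then show ?thesis using initial[OF that] by (simp add: bump_def)
    qed
    show x: "x \<in> closure \<Omega>" using \<open>x \<in> \<Omega>\<close> closure_subset by blast
    have "0 \<le> (x - xc) \<bullet> (x - xc)" by simp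
    then show "0 \<le> t" using horizon[OF x] \<open>T < t\<close> by argo
  qed
  then show ?thesis by (simp add: bump_eq_0_after[OF \<open>T < t\<close>])
qed

theorem theorem1p3:
  fixes \<Omega> :: "(real^'n) set" and j :: nat
  assumes "open \<Omega>" and "bounded \<Omega>" and "connected \<Omega>" and "\<Omega> \<noteq> {}"
    and "CARD('n) \<ge> 2"
    and "1 \<le> j" and "j \<le> CARD('n)"
  shows "\<exists>T>0. \<forall>(p :: real^'n \<Rightarrow> real) (u0 :: real^'n \<Rightarrow> real) (u :: real^'n \<Rightarrow> real \<Rightarrow> real).
           affine_fun p \<and>
           continuous_on (closure \<Omega>) u0 \<and> (\<forall>x \<in> frontier \<Omega>. u0 x = p x) \<and>
           continuous_on (closure \<Omega> \<times> {0..}) (\<lambda>(x,t). u x t) \<and>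
           visc_sol j \<Omega> u \<and>
           (\<forall>x \<in> frontier \<Omega>. \<forall>t>0. u x t = p x) \<and>
           (\<forall>x \<in> closure \<Omega>. u x 0 = u0 x)
           \<longrightarrow> (j = 1 \<longrightarrow> (\<forall>x \<in> \<Omega>. \<forall>t>T. u x t \<le> p x)) \<and>
               (j = CARD('n) \<longrightarrow> (\<forall>x \<in> \<Omega>. \<forall>t>T. u x t \<ge> p x)) \<and>
               (1 < j \<and> j < CARD('n) \<longrightarrow> (\<forall>x \<in> \<Omega>. \<forall>t>T. u x t = p x))"
proof -
  obtain xc T where "0 < T" and horizon: "\<And>x. x \<in> closure \<Omega> \<Longrightarrow> (x - xc) \<bullet> (x - xc) \<le> 2 * T - 1"
    using bounded_obtain_horizon[OF \<open>bounded \<Omega>\<close>] by blast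
  show ?thesis
  proof (intro exI[of _ T] conjI allI impI \<open>0 < T\<close>)
    fix p u0 :: "real^'n \<Rightarrow> real" and u :: "real^'n \<Rightarrow> real \<Rightarrow> real"
    assume H: "affine_fun p \<and> continuous_on (closure \<Omega>) u0 \<and> (\<forall>x \<in> frontier \<Omega>. u0 x = p x) \<and>
      continuous_on (closure \<Omega> \<times> {0..}) (\<lambda>(x,t). u x t) \<and> visc_sol j \<Omega> u \<and>
      (\<forall>x \<in> frontier \<Omega>. \<forall>t>0. u x t = p x) \<and> (\<forall>x \<in> closure \<Omega>. u x 0 = u0 x)"
    then have "affine_fun p" and u0_cont: "continuous_on (closure \<Omega>) u0"
      and u_cont: "continuous_on (closure \<Omega> \<times> {0..}) (\<lambda>(x,t). u x t)"
      and sol: "visc_subsol j \<Omega> u" "visc_supersol j \<Omega> u"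
      and lateral_p: "\<forall>x \<in> frontier \<Omega>. \<forall>t>0. u x t = p x"
      and u0_eq: "\<forall>x \<in> closure \<Omega>. u x 0 = u0 x"
      unfolding visc_sol_def by blast+
    then obtain a b where p: "p = (\<lambda>x. a \<bullet> x + b)" unfolding affine_fun_def by blast
    have "continuous_on (closure \<Omega>) (\<lambda>x. u0 x - p x)"
      unfolding p by (intro continuous_on_diff continuous_on_add continuous_on_inner
          continuous_on_const continuous_on_id u0_cont)
    then obtain M where "0 \<le> M" and M: "\<And>x. x \<in> closure \<Omega> \<Longrightarrow> \<bar>u0 x - p x\<bar> \<le> M"
      by (rule continuous_on_compact_obtain_abs_bound) (use \<open>bounded \<Omega>\<close> that in auto)
    have lateral: "\<And>x t. x \<in> frontier \<Omega> \<Longrightarrow> 0 < t \<Longrightarrow> u x t = a \<bullet> x + b"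
      using lateral_p unfolding p by blast
    have initial: "u x 0 \<le> a \<bullet> x + b + M" "a \<bullet> x + b - M \<le> u x 0" if "x \<in> closure \<Omega>" for x
      using M[OF that] u0_eq that unfolding p by auto
    have below: "u x t \<le> p x" if "j < CARD('n)" "x \<in> \<Omega>" "T < t" for x t
      unfolding p by (rule visc_subsol_le_affine_after_horizon[OF \<open>bounded \<Omega>\<close> \<open>1 \<le> j\<close>
          \<open>j < CARD('n)\<close> u_cont sol(1) lateral initial(1) \<open>0 \<le> M\<close> horizon that(2,3)])
    have above: "p x \<le> u x t" if "2 \<le> j" "x \<in> \<Omega>" "T < t" for x t
      unfolding p by (rule visc_supersol_ge_affine_after_horizon[OF \<open>bounded \<Omega>\<close> \<open>2 \<le> j\<close>
          \<open>j \<le> CARD('n)\<close> u_cont sol(2) lateral initial(2) \<open>0 \<le> M\<close> horizon that(2,3)])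
    show "j = 1 \<Longrightarrow> \<forall>x\<in>\<Omega>. \<forall>t>T. u x t \<le> p x" using below assms(5) by simp
    show "j = CARD('n) \<Longrightarrow> \<forall>x\<in>\<Omega>. \<forall>t>T. p x \<le> u x t" using above assms(5) by simp
    show "1 < j \<and> j < CARD('n) \<Longrightarrow> \<forall>x\<in>\<Omega>. \<forall>t>T. u x t = p x"
      using below above by (simp add: order_antisym)
  qed
qed

end
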